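(* Let $S$ be a ramified inverse semigroup with zero. Let $A=\{a_1,\dots,a_n\}^{\downarrow}$, where $\{a_1,\dots,a_n\}$ is a finite set of pairwise compatible elements of $S$. Then $A=\{b_1,\dots,b_m\}^{\downarrow}$ for some finite set $\{b_1,\dots,b_m\}$ of pairwise orthogonal elements.
   Context: The natural partial order is used; $X^{\downarrow}=\{s\in S : s\le x \text{ for some } x\in X\}$. Elements $s,t$ are compatible if $s^{-1}t$ and $st^{-1}$ are idempotents, orthogonal if $s^{-1}t=0=st^{-1}$. $S$ is ramified if for all $a,b,c\in S$ with $a\ne0$, $a\le b$ and $a\le c$ imply $b\le c$ or $c\le b$. *)

theory Defs
  imports Main
begin

definition inverse_semigroup :: "('a \<Rightarrow> 'a \<Rightarrow> 'a) \<Rightarrow> bool" where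
  "inverse_semigroup m \<longleftrightarrow>
     (\<forall>x y w. m (m x y) w = m x (m y w)) \<and>
     (\<forall>s. \<exists>!t. m (m s t) s = s \<and> m (m t s) t = t)"

definition is_zero :: "('a \<Rightarrow> 'a \<Rightarrow> 'a) \<Rightarrow> 'a \<Rightarrow> bool" where
  "is_zero m z \<longleftrightarrow> (\<forall>s. m z s = z \<and> m s z = z)"

definition isg_inv :: "('a \<Rightarrow> 'a \<Rightarrow> 'a) \<Rightarrow> 'a \<Rightarrow> 'a" where
  "isg_inv m s = (THE t. m (m s t) s = s \<and> m (m t s) t = t)"

definition idem :: "('a \<Rightarrow> 'a \<Rightarrow> 'a) \<Rightarrow> 'a \<Rightarrow> bool" where
  "idem m e \<longleftrightarrow> m e e = e"

definition nat_le :: "('a \<Rightarrow> 'a \<Rightarrow> 'a) \<Rightarrow> 'a \<Rightarrow> 'a \<Rightarrow> bool" where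
  "nat_le m s t \<longleftrightarrow> (\<exists>e. idem m e \<and> s = m e t)"

definition down_closure :: "('a \<Rightarrow> 'a \<Rightarrow> 'a) \<Rightarrow> 'a set \<Rightarrow> 'a set" where
  "down_closure m X = {s. \<exists>x\<in>X. nat_le m s x}"

definition compatible :: "('a \<Rightarrow> 'a \<Rightarrow> 'a) \<Rightarrow> 'a \<Rightarrow> 'a \<Rightarrow> bool" where
  "compatible m s t \<longleftrightarrow> idem m (m (isg_inv m s) t) \<and> idem m (m s (isg_inv m t))"

definition orthogonal :: "('a \<Rightarrow> 'a \<Rightarrow> 'a) \<Rightarrow> 'a \<Rightarrow> 'a \<Rightarrow> 'a \<Rightarrow> bool" where
  "orthogonal m z s t \<longleftrightarrow> m (isg_inv m s) t = z \<and> m s (isg_inv m t) = z"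

definition ramified :: "('a \<Rightarrow> 'a \<Rightarrow> 'a) \<Rightarrow> 'a \<Rightarrow> bool" where
  "ramified m z \<longleftrightarrow> (\<forall>a b c. a \<noteq> z \<longrightarrow> nat_le m a b \<longrightarrow> nat_le m a c \<longrightarrow>
       nat_le m b c \<or> nat_le m c b)"

end

theory Submission
  imports Defs
begin

text \<open>The maximal elements of \<open>X\<close> in the natural partial order form the required set: every
  element of the finite set \<open>X\<close> lies below one of them, and two distinct compatible elements
  \<open>a\<close>, \<open>b\<close> have the common lower bound \<open>a b\<^sup>-\<^sup>1 a = a b\<^sup>-\<^sup>1 b\<close>. If this bound is nonzero,
  ramification makes \<open>a\<close> and \<open>b\<close> comparable, so at most one of them is maximal; if it is zero,
  then the idempotent \<open>a b\<^sup>-\<^sup>1\<close> is zero, hence so is its inverse \<open>b a\<^sup>-\<^sup>1\<close> and with it the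
  idempotent \<open>a\<^sup>-\<^sup>1 b = a\<^sup>-\<^sup>1 b a\<^sup>-\<^sup>1 b\<close>: \<open>a\<close> and \<open>b\<close> are orthogonal.\<close>

definition nat_maximal :: "('a \<Rightarrow> 'a \<Rightarrow> 'a) \<Rightarrow> 'a set \<Rightarrow> 'a set" where
  "nat_maximal m X = {a \<in> X. \<forall>u \<in> X. nat_le m a u \<longrightarrow> u = a}"

locale inv_semigroup =
  fixes m :: "'a \<Rightarrow> 'a \<Rightarrow> 'a" (infixl "\<cdot>" 70)
  assumes inverse_semigroup: "inverse_semigroup m"
begin

abbreviation semigroup_inverse :: "'a \<Rightarrow> 'a" ("_\<^sup>-\<^sup>1" [1000] 999)
  where "s\<^sup>-\<^sup>1 \<equiv> isg_inv m s"

lemma assoc: "x \<cdot> y \<cdot> w = x \<cdot> (y \<cdot> w)"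
  using inverse_semigroup unfolding inverse_semigroup_def by blast

lemma unique_inverse: "\<exists>!t. s \<cdot> t \<cdot> s = s \<and> t \<cdot> s \<cdot> t = t"
  using inverse_semigroup unfolding inverse_semigroup_def by blast

lemma inverse_equations: "s \<cdot> s\<^sup>-\<^sup>1 \<cdot> s = s" "s\<^sup>-\<^sup>1 \<cdot> s \<cdot> s\<^sup>-\<^sup>1 = s\<^sup>-\<^sup>1"
  using theI'[OF unique_inverse] unfolding isg_inv_def by blast+

lemma inverse_unique: "s \<cdot> t \<cdot> s = s \<Longrightarrow> t \<cdot> s \<cdot> t = t \<Longrightarrow> t = s\<^sup>-\<^sup>1"
  using unique_inverse inverse_equations by blast

lemma mult_inverse_mult: "s \<cdot> (s\<^sup>-\<^sup>1 \<cdot> (s \<cdot> w)) = s \<cdot> w"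
  by (metis inverse_equations(1) assoc)

lemma inverse_mult_inverse: "s\<^sup>-\<^sup>1 \<cdot> (s \<cdot> (s\<^sup>-\<^sup>1 \<cdot> w)) = s\<^sup>-\<^sup>1 \<cdot> w"
  by (metis inverse_equations(2) assoc)

lemma inverse_inverse: "(s\<^sup>-\<^sup>1)\<^sup>-\<^sup>1 = s"
  using inverse_unique[of "s\<^sup>-\<^sup>1" s] inverse_equations by metis

lemma idem_inverse: "e \<cdot> e = e \<Longrightarrow> e\<^sup>-\<^sup>1 = e"
  using inverse_unique[of e e] by metis

lemma idem_mult_inverse: "s \<cdot> s\<^sup>-\<^sup>1 \<cdot> (s \<cdot> s\<^sup>-\<^sup>1) = s \<cdot> s\<^sup>-\<^sup>1"
  by (simp add: assoc mult_inverse_mult)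

lemma idem_inverse_mult: "s\<^sup>-\<^sup>1 \<cdot> s \<cdot> (s\<^sup>-\<^sup>1 \<cdot> s) = s\<^sup>-\<^sup>1 \<cdot> s"
  by (simp add: assoc inverse_mult_inverse)

text \<open>The inverse of \<open>e \<cdot> f\<close> is \<open>f \<cdot> (e \<cdot> f)\<^sup>-\<^sup>1 \<cdot> e\<close>, which is idempotent, hence its own
  inverse.\<close>

lemma idem_mult:
  assumes e: "e \<cdot> e = e" and f: "f \<cdot> f = f"
  shows "e \<cdot> f \<cdot> (e \<cdot> f) = e \<cdot> f"
proof -
  define a where "a = e \<cdot> f"
  define b where "b = a\<^sup>-\<^sup>1"
  have aba: "a \<cdot> b \<cdot> a = a" and bab: "b \<cdot> a \<cdot> b = b"
    using inverse_equations b_def by auto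
  have "a \<cdot> (f \<cdot> b \<cdot> e) \<cdot> a = e \<cdot> (f \<cdot> f) \<cdot> b \<cdot> (e \<cdot> e) \<cdot> f"
    by (simp add: a_def assoc)
  also have "\<dots> = a" using e f aba by (simp add: a_def assoc)
  finally have 1: "a \<cdot> (f \<cdot> b \<cdot> e) \<cdot> a = a" .
  have "f \<cdot> b \<cdot> e \<cdot> a \<cdot> (f \<cdot> b \<cdot> e) = f \<cdot> (b \<cdot> (e \<cdot> e) \<cdot> (f \<cdot> f) \<cdot> b) \<cdot> e"
    by (simp add: a_def assoc)
  also have "\<dots> = f \<cdot> b \<cdot> e" using e f bab by (simp add: a_def assoc)
  finally have 2: "f \<cdot> b \<cdot> e \<cdot> a \<cdot> (f \<cdot> b \<cdot> e) = f \<cdot> b \<cdot> e" .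
  have b_eq: "b = f \<cdot> b \<cdot> e"
    using inverse_unique[OF 1 2] b_def by simp
  have "b \<cdot> b = f \<cdot> (b \<cdot> (e \<cdot> f) \<cdot> b) \<cdot> e"
    using b_eq by (metis assoc)
  also have "\<dots> = b" using bab b_eq by (simp add: a_def)
  finally have "b \<cdot> b = b" .
  moreover from this have "a = b"
    using idem_inverse inverse_inverse b_def by metis
  ultimately show ?thesis using a_def by simp
qed

lemma idem_commute:
  assumes e: "e \<cdot> e = e" and f: "f \<cdot> f = f"
  shows "e \<cdot> f = f \<cdot> e"
proof -
  have ef: "e \<cdot> f \<cdot> (e \<cdot> f) = e \<cdot> f" and fe: "f \<cdot> e \<cdot> (f \<cdot> e) = f \<cdot> e"
    using idem_mult e f by auto
  have "e \<cdot> f \<cdot> (f \<cdot> e) \<cdot> (e \<cdot> f) = e \<cdot> f" using ef e f by (metis assoc)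
  moreover have "f \<cdot> e \<cdot> (e \<cdot> f) \<cdot> (f \<cdot> e) = f \<cdot> e" using fe e f by (metis assoc)
  ultimately have "f \<cdot> e = (e \<cdot> f)\<^sup>-\<^sup>1" by (rule inverse_unique)
  thus ?thesis using idem_inverse[OF ef] by simp
qed

lemma inverse_mult: "(s \<cdot> t)\<^sup>-\<^sup>1 = t\<^sup>-\<^sup>1 \<cdot> s\<^sup>-\<^sup>1"
proof (rule inverse_unique[symmetric])
  have c: "t \<cdot> t\<^sup>-\<^sup>1 \<cdot> (s\<^sup>-\<^sup>1 \<cdot> s) = s\<^sup>-\<^sup>1 \<cdot> s \<cdot> (t \<cdot> t\<^sup>-\<^sup>1)"
    using idem_commute[OF idem_mult_inverse idem_inverse_mult] .
  have "s \<cdot> t \<cdot> (t\<^sup>-\<^sup>1 \<cdot> s\<^sup>-\<^sup>1) \<cdot> (s \<cdot> t) = s \<cdot> (t \<cdot> t\<^sup>-\<^sup>1 \<cdot> (s\<^sup>-\<^sup>1 \<cdot> s)) \<cdot> t"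
    by (simp add: assoc)
  also have "\<dots> = s \<cdot> t"
    unfolding c by (simp add: assoc mult_inverse_mult inverse_equations(1)[unfolded assoc])
  finally show "s \<cdot> t \<cdot> (t\<^sup>-\<^sup>1 \<cdot> s\<^sup>-\<^sup>1) \<cdot> (s \<cdot> t) = s \<cdot> t" .
  have "t\<^sup>-\<^sup>1 \<cdot> s\<^sup>-\<^sup>1 \<cdot> (s \<cdot> t) \<cdot> (t\<^sup>-\<^sup>1 \<cdot> s\<^sup>-\<^sup>1) = t\<^sup>-\<^sup>1 \<cdot> (s\<^sup>-\<^sup>1 \<cdot> s \<cdot> (t \<cdot> t\<^sup>-\<^sup>1)) \<cdot> s\<^sup>-\<^sup>1"
    by (simp add: assoc)
  also have "\<dots> = t\<^sup>-\<^sup>1 \<cdot> s\<^sup>-\<^sup>1" unfolding c[symmetric] by (simp add: assoc inverse_mult_inverse inverse_equations(2)[unfolded assoc])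
  finally show "t\<^sup>-\<^sup>1 \<cdot> s\<^sup>-\<^sup>1 \<cdot> (s \<cdot> t) \<cdot> (t\<^sup>-\<^sup>1 \<cdot> s\<^sup>-\<^sup>1) = t\<^sup>-\<^sup>1 \<cdot> s\<^sup>-\<^sup>1" .
qed

lemma nat_le_refl: "nat_le m s s"
  unfolding nat_le_def idem_def using idem_mult_inverse inverse_equations(1) by metis

lemma nat_le_trans: "nat_le m s t \<Longrightarrow> nat_le m t u \<Longrightarrow> nat_le m s u"
  unfolding nat_le_def idem_def by (metis idem_mult assoc)

lemma nat_le_antisym:
  assumes "nat_le m s t" "nat_le m t s" shows "s = t"
proof -
  obtain e f where e: "e \<cdot> e = e" and s: "s = e \<cdot> t" and f: "f \<cdot> f = f" and t: "t = f \<cdot> s"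
    using assms unfolding nat_le_def idem_def by auto
  have "t = f \<cdot> (e \<cdot> t)" using t s by simp
  also have "\<dots> = e \<cdot> (f \<cdot> t)" using idem_commute[OF e f] by (metis assoc)
  also have "\<dots> = e \<cdot> t" using t f by (metis assoc)
  finally show ?thesis using s by simp
qed

lemma compatible_common_restriction:
  assumes "compatible m a b"
  shows "a \<cdot> b\<^sup>-\<^sup>1 \<cdot> a = a \<cdot> b\<^sup>-\<^sup>1 \<cdot> b"
proof -
  let ?e = "a \<cdot> b\<^sup>-\<^sup>1"
  have e: "?e \<cdot> ?e = ?e" using assms unfolding compatible_def idem_def by simp
  have "?e = b \<cdot> a\<^sup>-\<^sup>1" using idem_inverse[OF e] inverse_mult inverse_inverse by metis
  then have "?e \<cdot> a = a \<cdot> (b\<^sup>-\<^sup>1 \<cdot> b \<cdot> (a\<^sup>-\<^sup>1 \<cdot> a))"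
    using e by (metis assoc)
  also have "\<dots> = a \<cdot> (a\<^sup>-\<^sup>1 \<cdot> a \<cdot> (b\<^sup>-\<^sup>1 \<cdot> b))"
    using idem_commute[OF idem_inverse_mult idem_inverse_mult] by metis
  also have "\<dots> = ?e \<cdot> b" by (simp add: assoc mult_inverse_mult)
  finally show ?thesis .
qed

lemma compatible_le_or_orthogonal:
  assumes zero: "is_zero m z" and "ramified m z" and ab: "compatible m a b"
  shows "nat_le m a b \<or> nat_le m b a \<or> orthogonal m z a b"
proof -
  let ?e = "a \<cdot> b\<^sup>-\<^sup>1"
  have e: "?e \<cdot> ?e = ?e" and f: "a\<^sup>-\<^sup>1 \<cdot> b \<cdot> (a\<^sup>-\<^sup>1 \<cdot> b) = a\<^sup>-\<^sup>1 \<cdot> b"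
    using ab unfolding compatible_def idem_def by auto
  have le: "nat_le m (?e \<cdot> a) a" "nat_le m (?e \<cdot> a) b"
    using e compatible_common_restriction[OF ab] unfolding nat_le_def idem_def by auto
  show ?thesis
  proof (cases "?e \<cdot> a = z")
    case False
    with le \<open>ramified m z\<close> show ?thesis unfolding ramified_def by blast
  next
    case True
    have "?e = ?e \<cdot> b \<cdot> b\<^sup>-\<^sup>1" by (simp add: assoc inverse_equations(2)[unfolded assoc])
    also have "\<dots> = z"
      using True compatible_common_restriction[OF ab] zero unfolding is_zero_def by simp
    finally have e_zero: "?e = z" .
    then have "b \<cdot> a\<^sup>-\<^sup>1 = z" using idem_inverse[OF e] inverse_mult inverse_inverse by metis
    then have "a\<^sup>-\<^sup>1 \<cdot> b = z" using f zero unfolding is_zero_def by (metis assoc)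
    with e_zero show ?thesis unfolding orthogonal_def by simp
  qed
qed

lemma exists_nat_maximal_above:
  assumes "finite X" "x \<in> X"
  shows "\<exists>y \<in> nat_maximal m X. nat_le m x y"
proof -
  let ?less = "\<lambda>s t. nat_le m s t \<and> s \<noteq> t"
  have "asymp_on X ?less" by (auto intro: asymp_onI dest: nat_le_antisym)
  moreover have "transp_on X ?less" by (auto intro!: transp_onI dest: nat_le_antisym nat_le_trans)
  ultimately obtain y where "y \<in> X" "nat_le m x y" and "\<forall>u \<in> X. ?less y u \<longrightarrow> \<not> nat_le m x u"
    using Finite_Set.bex_max_element_with_property[of X ?less "nat_le m x"] assms nat_le_refl
    by blast
  then show ?thesis unfolding nat_maximal_def using nat_le_trans by blast
qed

lemma down_closure_nat_maximal:
  assumes "finite X"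
  shows "down_closure m (nat_maximal m X) = down_closure m X"
proof
  show "down_closure m (nat_maximal m X) \<subseteq> down_closure m X"
    unfolding down_closure_def nat_maximal_def by blast
  show "down_closure m X \<subseteq> down_closure m (nat_maximal m X)"
    unfolding down_closure_def
    using exists_nat_maximal_above[OF assms] nat_le_trans by blast
qed

lemma pairwise_orthogonal_nat_maximal:
  assumes "is_zero m z" "ramified m z" "pairwise (compatible m) X"
  shows "pairwise (orthogonal m z) (nat_maximal m X)"
  using assms compatible_le_or_orthogonal unfolding pairwise_def nat_maximal_def by blast

end

theorem lemma3p8:
  fixes m :: "'a \<Rightarrow> 'a \<Rightarrow> 'a" and z :: 'a and X :: "'a set"
  assumes "inverse_semigroup m"
    and "is_zero m z"
    and "ramified m z"
    and "finite X"
    and "pairwise (compatible m) X"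
  shows "\<exists>Y. finite Y \<and> pairwise (orthogonal m z) Y \<and> down_closure m X = down_closure m Y"
proof -
  interpret inv_semigroup m by (rule inv_semigroup.intro) (fact assms(1))
  have "finite (nat_maximal m X)"
    using assms(4) unfolding nat_maximal_def by simp
  with down_closure_nat_maximal[OF assms(4)]
    pairwise_orthogonal_nat_maximal[OF assms(2,3,5)] show ?thesis by metis
qed

end
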